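(* Let $\lambda>0$, $\gamma>2$, $c>0$ and $\rho>0$ be fixed, and let $W_e>0$. Define $$g(r)=r^{-\gamma-2}\Big(\gamma^2+\frac{4W_e}{c^2}r^2\Big),\qquad Z(s)=\int_0^\infty\big[1-e^{-s g(r)}\big]r\,dr,\qquad \mathrm{CRB}_{\mathrm{LB}}=\frac{4}{\rho}\int_0^\infty e^{-2\pi\lambda Z(s)}\,ds,$$ and $$\mathrm{CRB}_{\mathrm{LB,W}}=\frac{c^2(\pi\lambda)^{-\gamma/2}}{\rho W_e}\,\Gamma^{-\gamma/2}\Big(1-\frac{2}{\gamma}\Big)\,\Gamma\Big(1+\frac{\gamma}{2}\Big).$$ Then $$\Big(1-\frac{\pi\lambda c^2\gamma}{2W_e}\Big)\mathrm{CRB}_{\mathrm{LB,W}}<\mathrm{CRB}_{\mathrm{LB}}<\mathrm{CRB}_{\mathrm{LB,W}}.$$ Hence $\mathrm{CRB}_{\mathrm{LB}}/\mathrm{CRB}_{\mathrm{LB,W}}\to 1$ as $W_e\to\infty$, with convergence rate $O(1/W_e)$.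
   Context: Here $\lambda$ is the sensor density of a homogeneous Poisson point process of sensors, $\gamma$ is the path-loss exponent, $c$ is the speed of light, $\rho$ is a signal-to-noise ratio constant, and $W_e$ is the effective bandwidth of the transmitted signal. $\Gamma$ denotes the Gamma function, and $\Gamma^{-\gamma/2}(z)$ means $\Gamma(z)^{-\gamma/2}$. *)

theory Defs
  imports "HOL-Analysis.Analysis" "HOL-Library.Landau_Symbols"
begin

definition gfun :: "real \<Rightarrow> real \<Rightarrow> real \<Rightarrow> real \<Rightarrow> real" where
  "gfun \<gamma> c We r = r powr (-\<gamma> - 2) * (\<gamma>^2 + 4 * We / c^2 * r^2)"

definition Zfun :: "real \<Rightarrow> real \<Rightarrow> real \<Rightarrow> real \<Rightarrow> real" where
  "Zfun \<gamma> c We s = (\<integral>r\<in>{0<..}. (1 - exp (- s * gfun \<gamma> c We r)) * r \<partial>lborel)"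

definition CRB_LB :: "real \<Rightarrow> real \<Rightarrow> real \<Rightarrow> real \<Rightarrow> real \<Rightarrow> real" where
  "CRB_LB lam \<gamma> c \<rho> We =
     4 / \<rho> * (\<integral>s\<in>{0<..}. exp (- 2 * pi * lam * Zfun \<gamma> c We s) \<partial>lborel)"

definition CRB_LBW :: "real \<Rightarrow> real \<Rightarrow> real \<Rightarrow> real \<Rightarrow> real \<Rightarrow> real" where
  "CRB_LBW lam \<gamma> c \<rho> We =
     c^2 * (pi * lam) powr (- \<gamma> / 2) / (\<rho> * We)
     * Gamma (1 - 2 / \<gamma>) powr (- \<gamma> / 2) * Gamma (1 + \<gamma> / 2)"

end

theory Submission
  imports Defs "HOL-Real_Asymp.Real_Asymp"
begin

text \<open>
  Put a = 4 W_e / c^2. Then s g(r) = x + y with x = s a r^(-\<gamma>) and y = s \<gamma>^2 r^(-\<gamma>-2).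
  The term x alone gives Z_W(s) = (s a)^(2/\<gamma>) \<Gamma>(1 - 2/\<gamma>) / 2 in closed form (Tonelli),
  and then 4/\<rho> \<integral> exp(-2\<pi>\<lambda> Z_W(s)) ds is a Gamma integral equal to CRB_LB,W.
  The term y raises Z by a positive amount of at most \<gamma>/a, since
  1 - e^-(x+y) \<le> 1 - e^-x + e^-x y and e^-x y r is \<gamma>/a times a Frechet density in r.
  Hence e^-\<delta> CRB_LB,W \<le> CRB_LB < CRB_LB,W with \<delta> = 2\<pi>\<lambda>\<gamma>/a = \<pi>\<lambda>c^2\<gamma>/(2 W_e),
  and 1 - \<delta> < e^-\<delta>.
\<close>

lemma le_powr_inverse_iff:
  fixes x y q :: real
  assumes "0 \<le> x" "0 \<le> y" "0 < q"
  shows "x \<le> y powr (1/q) \<longleftrightarrow> x powr q \<le> y"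
proof -
  have "x \<le> y powr (1/q) \<longleftrightarrow> x powr q \<le> (y powr (1/q)) powr q"
    using assms by (meson not_le powr_less_mono2 powr_mono2 less_imp_le powr_ge_zero)
  also have "(y powr (1/q)) powr q = y"
    using assms by (simp add: powr_powr)
  finally show ?thesis .
qed

lemma powr_neg_superlevel_eq_Ioc:
  fixes b \<gamma> t :: real
  assumes "b > 0" "\<gamma> > 0" "t > 0"
  shows "{r. 0 < r \<and> t \<le> b * r powr -\<gamma>} = {0<..(b/t) powr (1/\<gamma>)}"
  using assms le_powr_inverse_iff[of _ "b/t" \<gamma>] by (auto simp: powr_minus field_simps)

lemma powr_sublevel_eq_Ioc:
  fixes K q t :: real
  assumes "K > 0" "q > 0" "t > 0"
  shows "{s. 0 < s \<and> K * s powr q \<le> t} = {0<..(t/K) powr (1/q)}"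
  using assms le_powr_inverse_iff[of _ "t/K" q] by (auto simp: field_simps)

lemma nn_integral_Ioc_exp_neg:
  fixes x :: real
  assumes "x \<ge> 0"
  shows "(\<integral>\<^sup>+t. ennreal (indicator {0<..x} t * exp (-t)) \<partial>lborel) = ennreal (1 - exp (-x))"
proof -
  have "((\<lambda>t. exp (-t)) has_integral (- exp (-x) - (- exp (-0)))) {0..x}"
    by (rule fundamental_theorem_of_calculus[OF assms])
       (auto intro!: derivative_eq_intros simp: has_real_derivative_iff_has_vector_derivative[symmetric])
  then have "(\<integral>\<^sup>+t. ennreal (indicator {0..x} t * exp (-t)) \<partial>lborel) = ennreal (1 - exp (-x))"
    by (subst nn_integral_has_integral_lebesgue) auto
  moreover have "(\<integral>\<^sup>+t. ennreal (indicator {0<..x} t * exp (-t)) \<partial>lborel)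
      = (\<integral>\<^sup>+t. ennreal (indicator {0..x} t * exp (-t)) \<partial>lborel)"
    by (intro nn_integral_cong_AE eventually_mono[OF AE_lborel_singleton[of 0]])
       (auto simp: indicator_def)
  ultimately show ?thesis by simp
qed

lemma nn_integral_Ici_exp_neg:
  fixes y :: real
  shows "(\<integral>\<^sup>+t. ennreal (indicator {y..} t * exp (-t)) \<partial>lborel) = ennreal (exp (-y))"
proof -
  have lim: "((\<lambda>t::real. - exp (-t)) \<longlongrightarrow> 0) at_top" by real_asymp
  have "(\<integral>\<^sup>+t. ennreal (exp (-t)) * indicator {y..} t \<partial>lborel) = ennreal (0 - (- exp (-y)))"
    by (rule nn_integral_FTC_atLeast[where F="\<lambda>t. - exp (-t)", OF _ _ _ lim])
       (auto intro!: derivative_eq_intros)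
  moreover have "(\<integral>\<^sup>+t. ennreal (indicator {y..} t * exp (-t)) \<partial>lborel)
      = (\<integral>\<^sup>+t. ennreal (exp (-t)) * indicator {y..} t \<partial>lborel)"
    by (intro nn_integral_cong) (auto simp: indicator_def)
  ultimately show ?thesis by simp
qed

lemma nn_integral_Ioc_ident:
  fixes R :: real
  assumes "R \<ge> 0"
  shows "(\<integral>\<^sup>+r. ennreal (indicator {0<..R} r * r) \<partial>lborel) = ennreal (R^2 / 2)"
proof -
  have "(\<integral>\<^sup>+r. ennreal (indicator {0..R} r * r) \<partial>lborel) = ennreal (R^2 / 2)"
    using ident_has_integral[OF assms] by (subst nn_integral_has_integral_lebesgue) auto
  moreover have "(\<integral>\<^sup>+r. ennreal (indicator {0<..R} r * r) \<partial>lborel)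
      = (\<integral>\<^sup>+r. ennreal (indicator {0..R} r * r) \<partial>lborel)"
    by (intro nn_integral_cong) (auto simp: indicator_def)
  ultimately show ?thesis by simp
qed

lemma Gamma_one_minus_two_div_pos:
  fixes \<gamma> :: real
  assumes "\<gamma> > 2"
  shows "Gamma (1 - 2/\<gamma>) > 0"
  using assms by (intro Gamma_real_pos) (simp add: field_simps)

text \<open>Both Gamma integrals below come from writing an exponential as an integral over an
  auxiliary variable t and integrating in the other order (Tonelli).\<close>

lemma nn_integral_one_minus_exp_neg_powr:
  fixes b \<gamma> :: real
  assumes b: "b > 0" and \<gamma>: "\<gamma> > 2"
  shows "(\<integral>\<^sup>+r. ennreal (indicator {0<..} r * ((1 - exp (-(b * r powr -\<gamma>))) * r)) \<partial>lborel)
       = ennreal (b powr (2/\<gamma>) / 2 * Gamma (1 - 2/\<gamma>))"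
proof -
  define f where "f = (\<lambda>r t::real. ennreal (if 0 < r \<and> 0 < t \<and> t \<le> b * r powr -\<gamma> then r * exp (-t) else 0))"
  have inner_t: "ennreal (indicator {0<..} r * ((1 - exp (-(b * r powr -\<gamma>))) * r)) = (\<integral>\<^sup>+t. f r t \<partial>lborel)"
    for r
  proof (cases "r > 0")
    case True
    have "(\<integral>\<^sup>+t. f r t \<partial>lborel)
        = (\<integral>\<^sup>+t. ennreal r * ennreal (indicator {0<..b * r powr -\<gamma>} t * exp (-t)) \<partial>lborel)"
      using True by (intro nn_integral_cong) (auto simp: f_def indicator_def ennreal_mult')
    also have "\<dots> = ennreal r * ennreal (1 - exp (-(b * r powr -\<gamma>)))"
      using b True by (simp add: nn_integral_cmult nn_integral_Ioc_exp_neg)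
    finally show ?thesis
      using b True by (simp add: ennreal_mult[symmetric] mult.commute)
  qed (simp add: f_def)
  have inner_r: "(\<integral>\<^sup>+r. f r t \<partial>lborel)
      = ennreal (b powr (2/\<gamma>) / 2) * ennreal (indicator {0..} t * t powr ((1 - 2/\<gamma>) - 1) / exp t)" for t
  proof (cases "t > 0")
    case True
    define R where "R = (b/t) powr (1/\<gamma>)"
    have region: "{r. 0 < r \<and> t \<le> b * r powr -\<gamma>} = {0<..R}"
      unfolding R_def by (rule powr_neg_superlevel_eq_Ioc) (use b \<gamma> True in auto)
    have "(\<integral>\<^sup>+r. f r t \<partial>lborel) = (\<integral>\<^sup>+r. ennreal (exp (-t)) * ennreal (indicator {0<..R} r * r) \<partial>lborel)"
      using True by (intro nn_integral_cong) (auto simp: f_def indicator_def ennreal_mult' mult.commute simp flip: region)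
    also have "\<dots> = ennreal (exp (-t)) * ennreal (R^2 / 2)"
      by (simp add: R_def nn_integral_cmult nn_integral_Ioc_ident)
    also have "R^2 = b powr (2/\<gamma>) * t powr (-2/\<gamma>)"
      using True b by (simp add: R_def powr_realpow[symmetric] powr_powr powr_divide powr_minus_divide divide_simps)
    finally show ?thesis
      using True b by (simp add: ennreal_mult[symmetric] exp_minus powr_diff field_simps)
  next
    case False
    then show ?thesis by (cases "t = 0") (auto simp: f_def indicator_def)
  qed
  have "(\<integral>\<^sup>+r. ennreal (indicator {0<..} r * ((1 - exp (-(b * r powr -\<gamma>))) * r)) \<partial>lborel)
      = (\<integral>\<^sup>+r. \<integral>\<^sup>+t. f r t \<partial>lborel \<partial>lborel)"
    by (simp add: inner_t)
  also have "\<dots> = (\<integral>\<^sup>+t. \<integral>\<^sup>+r. f r t \<partial>lborel \<partial>lborel)"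
    by (rule lborel_pair.Fubini'[symmetric]) (unfold f_def, measurable)
  also have "\<dots> = (\<integral>\<^sup>+t. ennreal (b powr (2/\<gamma>) / 2)
                      * ennreal (indicator {0..} t * t powr ((1 - 2/\<gamma>) - 1) / exp t) \<partial>lborel)"
    by (simp add: inner_r)
  also have "\<dots> = ennreal (b powr (2/\<gamma>) / 2) * ennreal (Gamma (1 - 2/\<gamma>))"
    using \<gamma> by (simp add: nn_integral_cmult Gamma_conv_nn_integral_real)
  finally show ?thesis
    using Gamma_one_minus_two_div_pos[OF \<gamma>] by (simp add: ennreal_mult[symmetric])
qed

lemma nn_integral_exp_neg_powr:
  fixes K q :: real
  assumes K: "K > 0" and q: "q > 0"
  shows "(\<integral>\<^sup>+s. ennreal (indicator {0<..} s * exp (-(K * s powr q))) \<partial>lborel)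
       = ennreal (K powr (-1/q) * Gamma (1/q + 1))"
proof -
  define f where "f = (\<lambda>s t::real. ennreal (if 0 < s \<and> K * s powr q \<le> t then exp (-t) else 0))"
  have inner_t: "ennreal (indicator {0<..} s * exp (-(K * s powr q))) = (\<integral>\<^sup>+t. f s t \<partial>lborel)" for s
  proof (cases "s > 0")
    case True
    have "(\<integral>\<^sup>+t. f s t \<partial>lborel) = (\<integral>\<^sup>+t. ennreal (indicator {K * s powr q..} t * exp (-t)) \<partial>lborel)"
      using True by (intro nn_integral_cong) (auto simp: f_def indicator_def)
    then show ?thesis
      using True by (simp add: nn_integral_Ici_exp_neg)
  qed (simp add: f_def)
  have inner_s: "(\<integral>\<^sup>+s. f s t \<partial>lborel)
      = ennreal (K powr (-1/q)) * ennreal (indicator {0..} t * t powr ((1/q + 1) - 1) / exp t)" for t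
  proof (cases "t > 0")
    case True
    define R where "R = (t/K) powr (1/q)"
    have region: "{s. 0 < s \<and> K * s powr q \<le> t} = {0<..R}"
      unfolding R_def using K q True by (rule powr_sublevel_eq_Ioc)
    have "(\<integral>\<^sup>+s. f s t \<partial>lborel) = (\<integral>\<^sup>+s. ennreal (exp (-t)) * indicator {0<..R} s \<partial>lborel)"
      by (intro nn_integral_cong) (auto simp: f_def indicator_def simp flip: region)
    also have "\<dots> = ennreal (exp (-t)) * ennreal R"
      by (simp add: R_def nn_integral_cmult_indicator)
    also have "R = K powr (-1/q) * t powr (1/q)"
      using True K by (simp add: R_def powr_divide powr_minus_divide)
    finally show ?thesis
      using True K by (simp add: ennreal_mult[symmetric] exp_minus field_simps)
  next
    case False
    have Ks_pos: "K * s powr q > 0" if "s > 0" for s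
      using K that by simp
    have "f s t = 0" for s
      using False Ks_pos[of s] by (auto simp: f_def)
    with False show ?thesis by (cases "t = 0") (auto simp: indicator_def)
  qed
  have pos: "1/q + 1 > 0"
    using q by (simp add: add_pos_pos)
  have "(\<integral>\<^sup>+s. ennreal (indicator {0<..} s * exp (-(K * s powr q))) \<partial>lborel)
      = (\<integral>\<^sup>+s. \<integral>\<^sup>+t. f s t \<partial>lborel \<partial>lborel)"
    by (simp add: inner_t)
  also have "\<dots> = (\<integral>\<^sup>+t. \<integral>\<^sup>+s. f s t \<partial>lborel \<partial>lborel)"
    by (rule lborel_pair.Fubini'[symmetric]) (unfold f_def, measurable)
  also have "\<dots> = (\<integral>\<^sup>+t. ennreal (K powr (-1/q))
                      * ennreal (indicator {0..} t * t powr ((1/q + 1) - 1) / exp t) \<partial>lborel)"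
    by (simp add: inner_s)
  also have "\<dots> = ennreal (K powr (-1/q)) * ennreal (Gamma (1/q + 1))"
    using Gamma_conv_nn_integral_real[OF pos] by (simp add: nn_integral_cmult)
  finally show ?thesis
    using pos by (simp add: ennreal_mult[symmetric] Gamma_real_pos)
qed

lemma set_integral_of_nn_integral:
  fixes f :: "'a \<Rightarrow> real"
  assumes [measurable]: "f \<in> borel_measurable M" "A \<in> sets M"
    and nonneg: "\<And>x. x \<in> A \<Longrightarrow> 0 \<le> f x" and "0 \<le> v"
    and nn: "(\<integral>\<^sup>+x. ennreal (indicator A x * f x) \<partial>M) = ennreal v"
  shows "set_integrable M A f" and "(\<integral>x\<in>A. f x \<partial>M) = v"
proof -
  have "integrable M (\<lambda>x. indicator A x *\<^sub>R f x) \<and> integral\<^sup>L M (\<lambda>x. indicator A x *\<^sub>R f x) = v"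
    using nn nonneg \<open>0 \<le> v\<close> by (subst nn_integral_eq_integrable[symmetric]) (auto simp: indicator_def)
  then show "set_integrable M A f" and "(\<integral>x\<in>A. f x \<partial>M) = v"
    by (simp_all add: set_integrable_def set_lebesgue_integral_def)
qed

lemma set_integral_one_minus_exp_neg_powr:
  fixes b \<gamma> :: real
  assumes b: "b > 0" and \<gamma>: "\<gamma> > 2"
  shows "set_integrable lborel {0<..} (\<lambda>r. (1 - exp (-(b * r powr -\<gamma>))) * r)"
    and "(\<integral>r\<in>{0<..}. (1 - exp (-(b * r powr -\<gamma>))) * r \<partial>lborel) = b powr (2/\<gamma>) / 2 * Gamma (1 - 2/\<gamma>)"
proof -
  have "0 \<le> b powr (2/\<gamma>) / 2 * Gamma (1 - 2/\<gamma>)"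
    using Gamma_one_minus_two_div_pos[OF \<gamma>] by simp
  moreover have "(\<lambda>r. (1 - exp (-(b * r powr -\<gamma>))) * r) \<in> borel_measurable lborel"
    by measurable
  moreover have "0 \<le> (1 - exp (-(b * r powr -\<gamma>))) * r" if "r \<in> {0<..}" for r
    using that b by simp
  ultimately show "set_integrable lborel {0<..} (\<lambda>r. (1 - exp (-(b * r powr -\<gamma>))) * r)"
    and "(\<integral>r\<in>{0<..}. (1 - exp (-(b * r powr -\<gamma>))) * r \<partial>lborel) = b powr (2/\<gamma>) / 2 * Gamma (1 - 2/\<gamma>)"
    using set_integral_of_nn_integral[OF _ _ _ _ nn_integral_one_minus_exp_neg_powr[OF b \<gamma>]] by simp_all
qed

lemma emeasure_lborel_Ioi_ne_zero: "emeasure lborel {(a::real)<..} \<noteq> 0"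
proof -
  have "emeasure lborel {a<..a + 1} \<le> emeasure lborel {a<..}"
    by (intro emeasure_mono) auto
  then show ?thesis
    by auto
qed

lemma set_integral_strict_mono:
  fixes f g :: "'a \<Rightarrow> real"
  assumes f: "set_integrable M A f" and g: "set_integrable M A g"
    and A: "A \<in> sets M" "emeasure M A \<noteq> 0" and less: "\<And>x. x \<in> A \<Longrightarrow> f x < g x"
  shows "(\<integral>x\<in>A. f x \<partial>M) < (\<integral>x\<in>A. g x \<partial>M)"
proof -
  define h where "h = (\<lambda>x. indicator A x *\<^sub>R (g x - f x))"
  have h: "integrable M h" "integral\<^sup>L M h = (\<integral>x\<in>A. g x \<partial>M) - (\<integral>x\<in>A. f x \<partial>M)"
    using set_integral_diff[OF g f] by (simp_all add: h_def set_integrable_def set_lebesgue_integral_def)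
  have h_nonneg: "AE x in M. 0 \<le> h x"
    using less by (auto simp: h_def indicator_def less_imp_le)
  have "integral\<^sup>L M h \<noteq> 0"
  proof
    assume "integral\<^sup>L M h = 0"
    then have "AE x in M. h x = 0"
      using integral_nonneg_eq_0_iff_AE[OF h(1) h_nonneg] by simp
    then have "AE x in M. x \<notin> A"
      by (rule eventually_mono) (use less in \<open>fastforce simp: h_def\<close>)
    then show False
      using A sets.sets_into_space[OF A(1)] by (subst (asm) AE_iff_measurable[of A]) auto
  qed
  moreover have "integral\<^sup>L M h \<ge> 0"
    using h_nonneg by (rule integral_nonneg_AE)
  ultimately show ?thesis
    using h(2) by linarith
qed

lemma frechet_density_integral:
  fixes b \<gamma> :: real
  assumes b: "b > 0" and \<gamma>: "\<gamma> > 0"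
  shows "set_integrable lborel {0<..} (\<lambda>r. b * \<gamma> * r powr (-\<gamma>-1) * exp (-(b * r powr -\<gamma>)))"
    and "(\<integral>r\<in>{0<..}. b * \<gamma> * r powr (-\<gamma>-1) * exp (-(b * r powr -\<gamma>)) \<partial>lborel) = 1"
proof -
  define F where "F = (\<lambda>r::real. exp (-(b * r powr -\<gamma>)))"
  have D: "DERIV F x :> b * \<gamma> * x powr (-\<gamma>-1) * exp (-(b * x powr -\<gamma>))"
    if "0 < ereal x" "ereal x < \<infinity>" for x
    using that unfolding F_def
    by (auto intro!: derivative_eq_intros simp: powr_diff powr_minus field_simps)
  have "(F \<longlongrightarrow> 0) (at_right 0)" "(F \<longlongrightarrow> 1) at_top"
    unfolding F_def using b \<gamma> by real_asymp+
  then have L0: "((F \<circ> real_of_ereal) \<longlongrightarrow> 0) (at_right 0)"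
    and L1: "((F \<circ> real_of_ereal) \<longlongrightarrow> 1) (at_left \<infinity>)"
    unfolding zero_ereal_def ereal_tendsto_simps by simp_all
  have C: "isCont (\<lambda>x. b * \<gamma> * x powr (-\<gamma>-1) * exp (-(b * x powr -\<gamma>))) x"
    if "0 < ereal x" "ereal x < \<infinity>" for x
    using that by (auto intro!: continuous_intros)
  have nonneg: "AE x in lborel. 0 < ereal x \<longrightarrow> ereal x < \<infinity> \<longrightarrow> 0 \<le> b * \<gamma> * x powr (-\<gamma>-1) * exp (-(b * x powr -\<gamma>))"
    using b \<gamma> by auto
  note FTC = interval_integral_FTC_nonneg[where a=0 and b=\<infinity>, OF _ D C nonneg L0 L1]
  show "set_integrable lborel {0<..} (\<lambda>r. b * \<gamma> * r powr (-\<gamma>-1) * exp (-(b * r powr -\<gamma>)))"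
    using FTC(1) by (simp add: zero_ereal_def)
  show "(\<integral>r\<in>{0<..}. b * \<gamma> * r powr (-\<gamma>-1) * exp (-(b * r powr -\<gamma>)) \<partial>lborel) = 1"
    using FTC(2) by (simp add: zero_ereal_def interval_integral_to_infinity_eq)
qed

lemma one_minus_exp_neg_add_le:
  fixes x y :: real
  shows "1 - exp (-(x + y)) \<le> 1 - exp (-x) + exp (-x) * y"
proof -
  have "exp (-x) * (1 - y) \<le> exp (-x) * exp (-y)"
    using exp_minus_ge[of y] by (intro mult_left_mono) auto
  then show ?thesis by (simp add: exp_add[symmetric] algebra_simps)
qed

lemma tendsto_one_bigo_inverse_of_bounds:
  fixes R :: "real \<Rightarrow> real" and C :: real
  assumes "\<forall>\<^sub>F x in at_top. 1 - C / x \<le> R x \<and> R x \<le> 1"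
  shows "(R \<longlongrightarrow> 1) at_top" and "(\<lambda>x. R x - 1) \<in> O(\<lambda>x. 1 / x)"
proof -
  have lower: "((\<lambda>x. 1 - C / x) \<longlongrightarrow> 1) at_top" by real_asymp
  have "\<forall>\<^sub>F x in at_top. 1 - C / x \<le> R x" "\<forall>\<^sub>F x in at_top. R x \<le> 1"
    using assms by (auto elim: eventually_mono)
  from tendsto_sandwich[OF this lower tendsto_const] show "(R \<longlongrightarrow> 1) at_top" .
  show "(\<lambda>x. R x - 1) \<in> O(\<lambda>x. 1 / x)"
  proof (rule bigoI[where c=C])
    show "\<forall>\<^sub>F x in at_top. norm (R x - 1) \<le> C * norm (1 / x)"
      using assms eventually_gt_at_top[of 0] by eventually_elim (auto simp: abs_if)
  qed
qed

lemma gfun_split: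
  fixes \<gamma> c We s r :: real
  assumes "r > 0"
  shows "s * gfun \<gamma> c We r = s * (4 * We / c^2) * r powr -\<gamma> + s * \<gamma>^2 * r powr (-\<gamma>-2)"
proof -
  have "r powr (-\<gamma>-2) * r^2 = r powr (-\<gamma>-2) * r powr 2"
    using assms by (simp add: powr_numeral)
  also have "\<dots> = r powr -\<gamma>"
    by (simp add: powr_add[symmetric])
  finally show ?thesis
    by (simp add: gfun_def algebra_simps)
qed

lemma Zfun_integrand_bounds:
  fixes \<gamma> c We s r :: real
  assumes \<gamma>: "\<gamma> \<noteq> 0" and s: "s > 0" and r: "r > 0"
  defines "a \<equiv> 4 * We / c^2"
  shows "(1 - exp (-(s * a * r powr -\<gamma>))) * r < (1 - exp (- s * gfun \<gamma> c We r)) * r"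
    and "(1 - exp (- s * gfun \<gamma> c We r)) * r
       \<le> (1 - exp (-(s * a * r powr -\<gamma>))) * r + s * \<gamma>^2 * r powr (-\<gamma>-1) * exp (-(s * a * r powr -\<gamma>))"
proof -
  define x where "x = s * a * r powr -\<gamma>"
  define y where "y = s * \<gamma>^2 * r powr (-\<gamma>-2)"
  have split: "s * gfun \<gamma> c We r = x + y"
    using gfun_split[OF r, of s \<gamma> c We] by (simp add: x_def y_def a_def)
  have "y > 0"
    using \<gamma> s r by (simp add: y_def)
  then have "exp (-(x + y)) < exp (-x)"
    by simp
  then show "(1 - exp (-(s * a * r powr -\<gamma>))) * r < (1 - exp (- s * gfun \<gamma> c We r)) * r"
    using r by (simp add: split flip: x_def)
  have yr: "y * r = s * \<gamma>^2 * r powr (-\<gamma>-1)"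
    using r by (simp add: y_def powr_diff powr_minus field_simps power2_eq_square)
  have "(1 - exp (- s * gfun \<gamma> c We r)) * r \<le> (1 - exp (-x) + exp (-x) * y) * r"
    using one_minus_exp_neg_add_le[of x y] r by (simp add: split mult_right_mono)
  also have "\<dots> = (1 - exp (-x)) * r + y * r * exp (-x)"
    by (simp add: algebra_simps)
  finally show "(1 - exp (- s * gfun \<gamma> c We r)) * r
      \<le> (1 - exp (-(s * a * r powr -\<gamma>))) * r + s * \<gamma>^2 * r powr (-\<gamma>-1) * exp (-(s * a * r powr -\<gamma>))"
    unfolding yr x_def .
qed

lemma Zfun_bounds:
  fixes \<gamma> c We s :: real
  assumes \<gamma>: "\<gamma> > 2" and c: "c > 0" and We: "We > 0" and s: "s > 0"
  defines "a \<equiv> 4 * We / c^2"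
  shows "set_integrable lborel {0<..} (\<lambda>r. (1 - exp (- s * gfun \<gamma> c We r)) * r)"
    and "(s * a) powr (2/\<gamma>) / 2 * Gamma (1 - 2/\<gamma>) < Zfun \<gamma> c We s"
    and "Zfun \<gamma> c We s \<le> (s * a) powr (2/\<gamma>) / 2 * Gamma (1 - 2/\<gamma>) + \<gamma> / a"
proof -
  have a: "a > 0"
    using c We by (simp add: a_def)
  define z where "z = (\<lambda>r. (1 - exp (- s * gfun \<gamma> c We r)) * r)"
  define p where "p = (\<lambda>r. (1 - exp (-(s * a * r powr -\<gamma>))) * r)"
  define h where "h = (\<lambda>r. s * \<gamma>^2 * r powr (-\<gamma>-1) * exp (-(s * a * r powr -\<gamma>)))"
  have z_bounds: "p r < z r" "z r \<le> p r + h r" if "r > 0" for r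
    using Zfun_integrand_bounds[where c=c and We=We, OF _ s that] \<gamma> by (simp_all add: z_def p_def h_def a_def)
  have p_nonneg: "0 \<le> p r" if "r > 0" for r
    using that s a by (simp add: p_def)
  have p: "set_integrable lborel {0<..} p"
    "(\<integral>r\<in>{0<..}. p r \<partial>lborel) = (s * a) powr (2/\<gamma>) / 2 * Gamma (1 - 2/\<gamma>)"
    using set_integral_one_minus_exp_neg_powr[of "s * a" \<gamma>] s a \<gamma> by (simp_all add: p_def)
  have h_eq: "h = (\<lambda>r. \<gamma> / a * (s * a * \<gamma> * r powr (-\<gamma>-1) * exp (-(s * a * r powr -\<gamma>))))"
    using a by (intro ext) (simp add: h_def power2_eq_square)
  have "s * a > 0" "\<gamma> > 0"
    using s a \<gamma> by simp_all
  note frechet = frechet_density_integral[OF this]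
  have h: "set_integrable lborel {0<..} h" "(\<integral>r\<in>{0<..}. h r \<partial>lborel) = \<gamma> / a"
    unfolding h_eq set_integral_mult_right frechet(2)
    by (rule set_integrable_mult_right, rule frechet(1)) simp
  have z: "set_integrable lborel {0<..} z"
  proof (rule set_integrable_bound[where f="\<lambda>r. p r + h r"])
    show "set_integrable lborel {0<..} (\<lambda>r. p r + h r)"
      using p h by (intro set_integral_add)
    show "set_borel_measurable lborel {0<..} z"
      unfolding set_borel_measurable_def z_def gfun_def by measurable
    show "AE r in lborel. r \<in> {0<..} \<longrightarrow> norm (z r) \<le> norm (p r + h r)"
    proof (intro AE_I2 impI)
      fix r :: real
      assume "r \<in> {0<..}"
      then show "norm (z r) \<le> norm (p r + h r)"
        using z_bounds[of r] p_nonneg[of r] by simp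
    qed
  qed
  then show "set_integrable lborel {0<..} (\<lambda>r. (1 - exp (- s * gfun \<gamma> c We r)) * r)"
    by (simp add: z_def)
  have Zfun_eq: "Zfun \<gamma> c We s = (\<integral>r\<in>{0<..}. z r \<partial>lborel)"
    by (simp add: Zfun_def z_def)
  have "(\<integral>r\<in>{0<..}. p r \<partial>lborel) < (\<integral>r\<in>{0<..}. z r \<partial>lborel)"
    by (rule set_integral_strict_mono[OF p(1) z]) (auto intro: z_bounds simp: emeasure_lborel_Ioi_ne_zero)
  then show "(s * a) powr (2/\<gamma>) / 2 * Gamma (1 - 2/\<gamma>) < Zfun \<gamma> c We s"
    using p by (simp add: Zfun_eq)
  have "(\<integral>r\<in>{0<..}. z r \<partial>lborel) \<le> (\<integral>r\<in>{0<..}. p r + h r \<partial>lborel)"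
    using p h z z_bounds(2) by (intro set_integral_mono set_integral_add) auto
  then show "Zfun \<gamma> c We s \<le> (s * a) powr (2/\<gamma>) / 2 * Gamma (1 - 2/\<gamma>) + \<gamma> / a"
    using p h by (simp add: Zfun_eq set_integral_add)
qed

lemma Zfun_mono_on:
  fixes \<gamma> c We :: real
  assumes \<gamma>: "\<gamma> > 2" and c: "c > 0" and We: "We > 0"
  shows "mono_on {0<..} (Zfun \<gamma> c We)"
proof (rule mono_onI)
  fix s t :: real
  assume s: "s \<in> {0<..}" and t: "t \<in> {0<..}" and "s \<le> t"
  have "gfun \<gamma> c We r > 0" if "r > 0" for r
    using that \<gamma> c We unfolding gfun_def by (intro mult_pos_pos add_pos_nonneg) auto
  then have "(1 - exp (- s * gfun \<gamma> c We r)) * r \<le> (1 - exp (- t * gfun \<gamma> c We r)) * r"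
    if "r > 0" for r
    using that \<open>s \<le> t\<close> mult_right_mono[OF \<open>s \<le> t\<close>, of "gfun \<gamma> c We r"]
    by (intro mult_right_mono) auto
  then show "Zfun \<gamma> c We s \<le> Zfun \<gamma> c We t"
    unfolding Zfun_def using Zfun_bounds(1)[OF \<gamma> c We] s t by (intro set_integral_mono) auto
qed

lemma exp_neg_Zfun_bounds:
  fixes lam \<gamma> c We s :: real
  assumes lam: "lam > 0" and \<gamma>: "\<gamma> > 2" and c: "c > 0" and We: "We > 0" and s: "s > 0"
  defines "a \<equiv> 4 * We / c^2"
  defines "K \<equiv> pi * lam * Gamma (1 - 2/\<gamma>) * a powr (2/\<gamma>)"
  shows "exp (- 2 * pi * lam * Zfun \<gamma> c We s) < exp (-(K * s powr (2/\<gamma>)))"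
    and "exp (-(2 * pi * lam * \<gamma> / a)) * exp (-(K * s powr (2/\<gamma>))) \<le> exp (- 2 * pi * lam * Zfun \<gamma> c We s)"
proof -
  have a: "a > 0"
    using c We by (simp add: a_def)
  have Z: "(s * a) powr (2/\<gamma>) / 2 * Gamma (1 - 2/\<gamma>) < Zfun \<gamma> c We s"
    "Zfun \<gamma> c We s \<le> (s * a) powr (2/\<gamma>) / 2 * Gamma (1 - 2/\<gamma>) + \<gamma> / a"
    using Zfun_bounds[OF \<gamma> c We s] by (simp_all add: a_def)
  have K_eq: "2 * pi * lam * ((s * a) powr (2/\<gamma>) / 2 * Gamma (1 - 2/\<gamma>)) = K * s powr (2/\<gamma>)"
    using s a by (simp add: K_def powr_mult)
  have "K * s powr (2/\<gamma>) < 2 * pi * lam * Zfun \<gamma> c We s"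
    unfolding K_eq[symmetric] using Z(1) lam by (intro mult_strict_left_mono) auto
  then show "exp (- 2 * pi * lam * Zfun \<gamma> c We s) < exp (-(K * s powr (2/\<gamma>)))"
    by simp
  have "2 * pi * lam * Zfun \<gamma> c We s \<le> 2 * pi * lam * ((s * a) powr (2/\<gamma>) / 2 * Gamma (1 - 2/\<gamma>) + \<gamma> / a)"
    using Z(2) lam by (intro mult_left_mono) auto
  then have "2 * pi * lam * Zfun \<gamma> c We s \<le> K * s powr (2/\<gamma>) + 2 * pi * lam * \<gamma> / a"
    by (simp add: K_eq[symmetric] distrib_left)
  then show "exp (-(2 * pi * lam * \<gamma> / a)) * exp (-(K * s powr (2/\<gamma>))) \<le> exp (- 2 * pi * lam * Zfun \<gamma> c We s)"
    by (simp add: exp_add[symmetric])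
qed

lemma integral_exp_neg_Zfun_bounds:
  fixes lam \<gamma> c We :: real
  assumes lam: "lam > 0" and \<gamma>: "\<gamma> > 2" and c: "c > 0" and We: "We > 0"
  defines "a \<equiv> 4 * We / c^2"
  defines "K \<equiv> pi * lam * Gamma (1 - 2/\<gamma>) * a powr (2/\<gamma>)"
  shows "exp (-(2 * pi * lam * \<gamma> / a)) * (K powr (-\<gamma>/2) * Gamma (\<gamma>/2 + 1))
           \<le> (\<integral>s\<in>{0<..}. exp (- 2 * pi * lam * Zfun \<gamma> c We s) \<partial>lborel)"
    and "(\<integral>s\<in>{0<..}. exp (- 2 * pi * lam * Zfun \<gamma> c We s) \<partial>lborel) < K powr (-\<gamma>/2) * Gamma (\<gamma>/2 + 1)"
proof -
  define E where "E = (\<lambda>s. exp (- 2 * pi * lam * Zfun \<gamma> c We s))"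
  define EW where "EW = (\<lambda>s. exp (-(K * s powr (2/\<gamma>))))"
  have E_less: "E s < EW s" and E_ge: "exp (-(2 * pi * lam * \<gamma> / a)) * EW s \<le> E s" if "s > 0" for s
    using exp_neg_Zfun_bounds[OF lam \<gamma> c We that] by (simp_all add: E_def EW_def K_def a_def)
  have "a > 0"
    using c We by (simp add: a_def)
  then have "K > 0"
    using lam Gamma_one_minus_two_div_pos[OF \<gamma>] by (simp add: K_def)
  have EW_meas: "EW \<in> borel_measurable lborel"
    unfolding EW_def by measurable
  have EW_nonneg: "0 \<le> EW s" for s
    by (simp add: EW_def)
  have W_nonneg: "0 \<le> K powr (-\<gamma>/2) * Gamma (\<gamma>/2 + 1)"
    using \<gamma> by (simp add: Gamma_real_pos less_imp_le)
  have "(\<integral>\<^sup>+s. ennreal (indicator {0<..} s * EW s) \<partial>lborel) = ennreal (K powr (-\<gamma>/2) * Gamma (\<gamma>/2 + 1))"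
    using nn_integral_exp_neg_powr[OF \<open>K > 0\<close>, of "2/\<gamma>"] \<gamma> by (simp add: EW_def)
  note EW = set_integral_of_nn_integral[OF EW_meas _ EW_nonneg W_nonneg this, simplified]
  have "Zfun \<gamma> c We \<in> borel_measurable (restrict_space borel {0<..})"
    by (rule borel_measurable_mono_on_fnc[OF Zfun_mono_on[OF \<gamma> c We]])
  then have "E \<in> borel_measurable (restrict_space borel {0<..})"
    unfolding E_def by measurable
  then have E_meas: "set_borel_measurable lborel {0<..} E"
    unfolding set_borel_measurable_def
    by (subst (asm) borel_measurable_restrict_space_iff) (auto simp: measurable_cong_sets[OF sets_lborel refl])
  have E: "set_integrable lborel {0<..} E"
  proof (rule set_integrable_bound[OF EW(1) E_meas])
    show "AE s in lborel. s \<in> {0<..} \<longrightarrow> norm (E s) \<le> norm (EW s)"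
      using E_less by (intro AE_I2) (auto simp: E_def EW_def less_imp_le)
  qed
  have "(\<integral>s\<in>{0<..}. exp (-(2 * pi * lam * \<gamma> / a)) * EW s \<partial>lborel) \<le> (\<integral>s\<in>{0<..}. E s \<partial>lborel)"
    by (rule set_integral_mono) (use EW(1) E E_ge in auto)
  then show "exp (-(2 * pi * lam * \<gamma> / a)) * (K powr (-\<gamma>/2) * Gamma (\<gamma>/2 + 1))
           \<le> (\<integral>s\<in>{0<..}. exp (- 2 * pi * lam * Zfun \<gamma> c We s) \<partial>lborel)"
    by (simp add: EW(2) E_def)
  have "(\<integral>s\<in>{0<..}. E s \<partial>lborel) < (\<integral>s\<in>{0<..}. EW s \<partial>lborel)"
    by (rule set_integral_strict_mono[OF E EW(1)]) (auto intro: E_less simp: emeasure_lborel_Ioi_ne_zero)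
  then show "(\<integral>s\<in>{0<..}. exp (- 2 * pi * lam * Zfun \<gamma> c We s) \<partial>lborel) < K powr (-\<gamma>/2) * Gamma (\<gamma>/2 + 1)"
    by (simp add: EW(2) E_def)
qed

lemma CRB_LBW_eq:
  fixes lam \<gamma> c \<rho> We :: real
  assumes lam: "lam > 0" and \<gamma>: "\<gamma> > 2" and c: "c > 0" and We: "We > 0"
  defines "a \<equiv> 4 * We / c^2"
  defines "K \<equiv> pi * lam * Gamma (1 - 2/\<gamma>) * a powr (2/\<gamma>)"
  shows "CRB_LBW lam \<gamma> c \<rho> We = 4 / \<rho> * (K powr (-\<gamma>/2) * Gamma (\<gamma>/2 + 1))"
proof -
  have a: "a > 0"
    using c We by (simp add: a_def)
  have "K powr (-\<gamma>/2) = (pi * lam) powr (-\<gamma>/2) * Gamma (1 - 2/\<gamma>) powr (-\<gamma>/2) * (a powr (2/\<gamma>)) powr (-\<gamma>/2)"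
    using lam Gamma_one_minus_two_div_pos[OF \<gamma>] a by (simp add: K_def powr_mult)
  also have "(a powr (2/\<gamma>)) powr (-\<gamma>/2) = c^2 / (4 * We)"
    using a \<gamma> c We by (simp add: powr_powr powr_minus_divide a_def)
  finally show ?thesis
    unfolding CRB_LBW_def add.commute[of 1 "\<gamma>/2"] using c We
    by (cases "\<rho> = 0") (simp_all add: field_simps)
qed

theorem CRB_LB_bounds:
  fixes lam \<gamma> c \<rho> We :: real
  assumes lam: "lam > 0" and \<gamma>: "\<gamma> > 2" and c: "c > 0" and \<rho>: "\<rho> > 0" and We: "We > 0"
  shows "(1 - pi * lam * c^2 * \<gamma> / (2 * We)) * CRB_LBW lam \<gamma> c \<rho> We < CRB_LB lam \<gamma> c \<rho> We"
    and "CRB_LB lam \<gamma> c \<rho> We < CRB_LBW lam \<gamma> c \<rho> We"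
    and "CRB_LBW lam \<gamma> c \<rho> We > 0"
proof -
  define a where "a = 4 * We / c^2"
  define K where "K = pi * lam * Gamma (1 - 2/\<gamma>) * a powr (2/\<gamma>)"
  define W where "W = K powr (-\<gamma>/2) * Gamma (\<gamma>/2 + 1)"
  define \<delta> where "\<delta> = pi * lam * c^2 * \<gamma> / (2 * We)"
  have "\<delta> > 0"
    using lam \<gamma> c We by (simp add: \<delta>_def)
  have "2 * pi * lam * \<gamma> / a = \<delta>"
    using c We by (simp add: a_def \<delta>_def field_simps)
  then have bounds: "exp (-\<delta>) * W \<le> (\<integral>s\<in>{0<..}. exp (- 2 * pi * lam * Zfun \<gamma> c We s) \<partial>lborel)"
    "(\<integral>s\<in>{0<..}. exp (- 2 * pi * lam * Zfun \<gamma> c We s) \<partial>lborel) < W"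
    using integral_exp_neg_Zfun_bounds[OF lam \<gamma> c We] by (simp_all add: W_def K_def a_def)
  have LB: "CRB_LB lam \<gamma> c \<rho> We = 4 / \<rho> * (\<integral>s\<in>{0<..}. exp (- 2 * pi * lam * Zfun \<gamma> c We s) \<partial>lborel)"
    by (simp add: CRB_LB_def)
  have LBW: "CRB_LBW lam \<gamma> c \<rho> We = 4 / \<rho> * W"
    using CRB_LBW_eq[OF lam \<gamma> c We] by (simp add: W_def K_def a_def)
  have "a > 0"
    using c We by (simp add: a_def)
  then have "K > 0"
    using lam Gamma_one_minus_two_div_pos[OF \<gamma>] by (simp add: K_def)
  moreover have "Gamma (\<gamma>/2 + 1) > 0"
    using \<gamma> by (intro Gamma_real_pos) simp
  ultimately have "W > 0"
    by (simp add: W_def)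
  then show "CRB_LBW lam \<gamma> c \<rho> We > 0"
    using \<rho> by (simp add: LBW)
  show "CRB_LB lam \<gamma> c \<rho> We < CRB_LBW lam \<gamma> c \<rho> We"
    unfolding LB LBW using bounds(2) \<rho> by (intro mult_strict_left_mono) auto
  have "(1 - \<delta>) * W < exp (-\<delta>) * W"
    using exp_minus_greater[of \<delta>] \<open>\<delta> > 0\<close> \<open>W > 0\<close> by simp
  then have "(1 - \<delta>) * CRB_LBW lam \<gamma> c \<rho> We < 4 / \<rho> * (\<integral>s\<in>{0<..}. exp (- 2 * pi * lam * Zfun \<gamma> c We s) \<partial>lborel)"
    unfolding LBW mult.left_commute[of "1 - \<delta>"] using bounds(1) \<rho> by (intro mult_strict_left_mono) auto
  then show "(1 - pi * lam * c^2 * \<gamma> / (2 * We)) * CRB_LBW lam \<gamma> c \<rho> We < CRB_LB lam \<gamma> c \<rho> We"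
    unfolding LB \<delta>_def .
qed

theorem corollary1:
  fixes lam \<gamma> c \<rho> :: real
  assumes "lam > 0" and "\<gamma> > 2" and "c > 0" and "\<rho> > 0"
  shows "(\<forall>We>0.
            (1 - pi * lam * c^2 * \<gamma> / (2 * We)) * CRB_LBW lam \<gamma> c \<rho> We < CRB_LB lam \<gamma> c \<rho> We
          \<and> CRB_LB lam \<gamma> c \<rho> We < CRB_LBW lam \<gamma> c \<rho> We)
       \<and> ((\<lambda>We. CRB_LB lam \<gamma> c \<rho> We / CRB_LBW lam \<gamma> c \<rho> We) \<longlongrightarrow> 1) at_top
       \<and> (\<lambda>We. CRB_LB lam \<gamma> c \<rho> We / CRB_LBW lam \<gamma> c \<rho> We - 1) \<in> O[at_top](\<lambda>We. 1 / We)"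
proof -
  define C where "C = pi * lam * c^2 * \<gamma> / 2"
  define R where "R = (\<lambda>We. CRB_LB lam \<gamma> c \<rho> We / CRB_LBW lam \<gamma> c \<rho> We)"
  have ratio_bounds: "1 - C / We \<le> R We \<and> R We \<le> 1" if "We > 0" for We
    using CRB_LB_bounds[OF assms that]
    by (simp add: R_def C_def pos_le_divide_eq divide_le_eq less_imp_le)
  have "\<forall>\<^sub>F We in at_top. 1 - C / We \<le> R We \<and> R We \<le> 1"
    using eventually_gt_at_top[of 0] by eventually_elim (rule ratio_bounds)
  note ratio_limits = tendsto_one_bigo_inverse_of_bounds[OF this, unfolded R_def]
  show ?thesis
    using CRB_LB_bounds(1,2)[OF assms] ratio_limits by simp
qed

end
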